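(* Let $u(\mathbf{x},\Gamma_{\epsilon\boldsymbol{\omega}})$ be the scattered field of the impenetrable scattering problem with the randomly perturbed boundary $\Gamma_{\epsilon\boldsymbol{\omega}}=\Gamma+\epsilon\sum_{j=1}^m\omega_j\mathbf{v}_j$, and write $u(\mathbf{x})=u(\mathbf{x},\Gamma)$. Then, for $\mathbf{x}$ in the exterior of the (perturbed) scatterers, $$\mathbb{E}[u](\mathbf{x})=\mathbb{M}^1[u](\mathbf{x})=u(\mathbf{x})+\frac{\epsilon^2}{3!}\sum_{i=1}^m\delta_{[\mathbf{v}_i,\mathbf{v}_i]}u(\mathbf{x})+\mathcal{O}(\epsilon^4),$$ $$\mathbb{M}^2[u](\mathbf{x})=u^2(\mathbf{x})+\frac{\epsilon^2}{3}\sum_{i=1}^m\Big((\delta_{\mathbf{v}_i}u(\mathbf{x}))^2+u(\mathbf{x})\,\delta_{[\mathbf{v}_i,\mathbf{v}_i]}u(\mathbf{x})\Big)+\mathcal{O}(\epsilon^4),$$ and for every integer $n>2$, $$\mathbb{M}^n[u](\mathbf{x})=u^n(\mathbf{x})+\frac{\epsilon^2}{3}\sum_{i=1}^m\left(\binom n2u^{n-2}(\mathbf{x})(\delta_{\mathbf{v}_i}u(\mathbf{x}))^2+\binom n1u^{n-1}(\mathbf{x})\frac12\delta_{[\mathbf{v}_i,\mathbf{v}_i]}u(\mathbf{x})\right)+\mathcal{O}(\epsilon^4)$$ as $\epsilon\to0$.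
   Context: $D\subset\mathbb{R}^2$ is a bounded simply connected open set with smooth boundary $\Gamma$. For a boundary $\Gamma'$, the scattered field $u(\cdot,\Gamma')$ is defined outside the scatterer bounded by $\Gamma'$: the total field $u_{\rm tot}=\phi+u$ (with $\phi$ a plane wave or point-source incident field) satisfies $\nabla\cdot\alpha\nabla u_{\rm tot}+k^2u_{\rm tot}=0$ ($\alpha>0$, $k>0$ constants) in the exterior, with a sound-soft, sound-hard, or impedance boundary condition on $\Gamma'$, and $u$ satisfies the Sommerfeld radiation condition. The velocity fields $\mathbf{v}_1,\dots,\mathbf{v}_m\in C^\infty(\mathbb{R}^2,\mathbb{R}^2)$ have compact support in a band around $\Gamma$; $\delta_{\mathbf{v}_{i_1}}u$, $\delta_{[\mathbf{v}_{i_1},\mathbf{v}_{i_2}]}u,\dots$ denote the first, second, ... order shape derivatives of $u$ with respect to these velocity fields, and the field is assumed to admit the multivariate shape Taylor expansion $u(\mathbf{x},\Gamma_{\epsilon\boldsymbol\omega})=u(\mathbf{x})+\sum_{q=1}^{N}\frac{\epsilon^q}{q!}\sum_{i_1,\dots,i_q=1}^m\big(\prod_{j=1}^q\omega_{i_j}\big)\delta_{[\mathbf{v}_{i_1},\dots,\mathbf{v}_{i_q}]}u(\mathbf{x})+\mathcal{O}(\epsilon^{N+1})$ uniformly in $\boldsymbol\omega$. The random vector $\boldsymbol{\omega}=(\omega_1,\dots,\omega_m)$ has independent components, each uniformly distributed on $[-1,1]$, with density $P$. The $n$th moment is $\mathbb{M}^n[u](\mathbf{x})=\int[u(\mathbf{x},\Gamma_{\epsilon\boldsymbol\omega})]^nP(\boldsymbol\omega)\,d\boldsymbol\omega$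 and $\mathbb{E}[u]=\mathbb{M}^1[u]$. *)

theory Defs
  imports "HOL-Probability.Probability"
begin

definition omega_law :: "nat \<Rightarrow> (nat \<Rightarrow> real) measure" where
  "omega_law m = PiM {..<m} (\<lambda>_. uniform_measure lborel {-1..1::real})"

definition multi_idx :: "nat \<Rightarrow> nat \<Rightarrow> nat list set" where
  "multi_idx m q = {is. length is = q \<and> set is \<subseteq> {..<m}}"

text \<open>Truncated multivariate shape Taylor polynomial of order N:
  u(x) + sum_{q=1}^N eps^q/q! sum_{i_1..i_q} (prod_j omega_{i_j}) delta_[v_{i_1},...,v_{i_q}] u(x),
  where D [] = u(x) and D [i_1,...,i_q] = delta_[v_{i_1},...,v_{i_q}] u(x).\<close>
definition shape_taylor ::
  "nat \<Rightarrow> nat \<Rightarrow> (nat list \<Rightarrow> complex) \<Rightarrow> real \<Rightarrow> (nat \<Rightarrow> real) \<Rightarrow> complex" where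
  "shape_taylor m N D \<epsilon> \<omega> = D [] +
     (\<Sum>q\<in>{1..N}. complex_of_real (\<epsilon> ^ q / fact q) *
        (\<Sum>is\<in>multi_idx m q. complex_of_real (prod_list (map \<omega> is)) * D is))"

text \<open>n-th moment M^n[u](x) = int [u(x, Gamma_{eps omega})]^n P(omega) d omega,
  where U eps omega = u(x, Gamma_{eps omega}) for the fixed observation point x.\<close>
definition moment ::
  "nat \<Rightarrow> nat \<Rightarrow> (real \<Rightarrow> (nat \<Rightarrow> real) \<Rightarrow> complex) \<Rightarrow> real \<Rightarrow> complex" where
  "moment m n U \<epsilon> = (\<integral>\<omega>. (U \<epsilon> \<omega>) ^ n \<partial>omega_law m)"

end

theory Submission
  imports Defs "HOL-Computational_Algebra.Polynomial"
begin

(*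
  Let S(eps, omega) be the shape Taylor polynomial. The components of omega lie in [-1,1] almost
  surely, so S and U are bounded uniformly in omega, hence U^n = S^n + O(eps^4) and the n-th moment
  equals E[S^n] + O(eps^4). As a polynomial in eps, S^n has coefficients c_k(omega) which change sign
  by (-1)^k under the reflection omega -> -omega; this reflection preserves the law, so
  E[c_1] = E[c_3] = 0 and E[S^n] = E[c_0] + eps^2 E[c_2] + O(eps^4). Finally c_0 = u^n and
  c_2 = n u^(n-1) S_2 + (n choose 2) u^(n-2) S_1^2, where S_q is the q-th order term divided by q!,
  and E[omega_i omega_j] = delta_ij / 3 evaluates E[S_2] and E[S_1^2].
*)

section \<open>Reflection symmetry and the uniform distribution\<close>

lemma distr_uniform_measure_uminus:
  fixes a :: real
  shows "distr (uniform_measure lborel {-a..a}) (uniform_measure lborel {-a..a}) uminus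
     = uniform_measure lborel {-a..a}"
proof -
  define f where "f x = indicator {-a..a} x / emeasure lborel {-a..a}" for x :: real
  have f_even: "f \<circ> uminus = f"
    by (auto simp: f_def fun_eq_iff split: split_indicator)
  have "f \<in> borel_measurable borel"
    unfolding f_def by measurable
  then have "distr (density (distr lborel borel uminus) f) lborel uminus = density lborel (f \<circ> uminus)"
    by (intro distr_density_distr) auto
  then have "distr (density lborel f) lborel uminus = density lborel f"
    by (simp only: lborel_distr_uminus f_even)
  then show ?thesis
    unfolding uniform_measure_def f_def[symmetric]
    by (metis distr_cong sets_density sets_lborel)
qed

lemma integral_uniform_measure_power:
  fixes a b :: real
  assumes "a < b"
  shows "(\<integral>x. x ^ k \<partial>uniform_measure lborel {a..b}) = (b ^ Suc k - a ^ Suc k) / (Suc k * (b - a))"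
proof -
  have "1 / ennreal (b - a) = ennreal (1 / (b - a))"
    using assms divide_ennreal[of 1 "b - a"] by simp
  then have "uniform_measure lborel {a..b} = density lborel (\<lambda>x. ennreal (indicator {a..b} x / (b - a)))"
    unfolding uniform_measure_def using assms
    by (intro density_cong) (auto split: split_indicator)
  then have "(\<integral>x. x ^ k \<partial>uniform_measure lborel {a..b}) = (\<integral>x. x ^ k * indicator {a..b} x \<partial>lborel) / (b - a)"
    using assms by (simp add: integral_density mult.commute)
  also have "\<dots> = (b ^ Suc k - a ^ Suc k) / (Suc k * (b - a))"
    using assms by (simp add: integral_power)
  finally show ?thesis .
qed

lemma integral_eq_zero_if_odd:
  fixes f :: "'a \<Rightarrow> 'b::{banach, second_countable_topology}"
  assumes g: "g \<in> M \<rightarrow>\<^sub>M M" and invariant: "distr M M g = M"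
    and f: "f \<in> borel_measurable M" and odd: "\<And>x. x \<in> space M \<Longrightarrow> f (g x) = - f x"
  shows "integral\<^sup>L M f = 0"
proof -
  have "integral\<^sup>L M f = (\<integral>x. f (g x) \<partial>M)"
    using integral_distr[OF g, of f] f by (simp add: invariant)
  also have "\<dots> = - integral\<^sup>L M f"
    by (simp add: odd cong: Bochner_Integration.integral_cong)
  finally have "integral\<^sup>L M f + integral\<^sup>L M f = 0"
    by (metis neg_eq_iff_add_eq_0)
  then have "(2::real) *\<^sub>R integral\<^sup>L M f = 0"
    by (simp add: scaleR_2)
  then show ?thesis
    by simp
qed

section \<open>Essentially bounded functions\<close>

definition ess_bounded :: "'a measure \<Rightarrow> ('a \<Rightarrow> 'b::real_normed_vector) \<Rightarrow> bool" where
  "ess_bounded M f \<longleftrightarrow> f \<in> borel_measurable M \<and> (\<exists>B. AE x in M. norm (f x) \<le> B)"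

lemma ess_bounded_const: "ess_bounded M (\<lambda>_. c)"
  unfolding ess_bounded_def by auto

lemma ess_bounded_add:
  fixes f g :: "'a \<Rightarrow> 'b::{real_normed_vector, second_countable_topology}"
  assumes "ess_bounded M f" "ess_bounded M g"
  shows "ess_bounded M (\<lambda>x. f x + g x)"
proof -
  from assms obtain A B where "AE x in M. norm (f x) \<le> A" "AE x in M. norm (g x) \<le> B"
    unfolding ess_bounded_def by blast
  then have "AE x in M. norm (f x + g x) \<le> A + B"
    by eventually_elim (metis add_mono norm_triangle_le)
  with assms show ?thesis
    unfolding ess_bounded_def by auto
qed

lemma ess_bounded_mult:
  fixes f g :: "'a \<Rightarrow> 'b::{real_normed_algebra, second_countable_topology}"
  assumes "ess_bounded M f" "ess_bounded M g"
  shows "ess_bounded M (\<lambda>x. f x * g x)"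
proof -
  from assms obtain A B where "AE x in M. norm (f x) \<le> A" "AE x in M. norm (g x) \<le> B"
    unfolding ess_bounded_def by blast
  then have "AE x in M. norm (f x * g x) \<le> A * B"
    by eventually_elim (meson mult_mono' norm_ge_zero norm_mult_ineq order_trans)
  with assms show ?thesis
    unfolding ess_bounded_def by auto
qed

lemma ess_bounded_sum:
  fixes f :: "'i \<Rightarrow> 'a \<Rightarrow> 'b::{real_normed_vector, second_countable_topology}"
  assumes "\<And>i. i \<in> I \<Longrightarrow> ess_bounded M (f i)"
  shows "ess_bounded M (\<lambda>x. \<Sum>i\<in>I. f i x)"
  using assms
  by (induction I rule: infinite_finite_induct) (auto intro: ess_bounded_const ess_bounded_add)

lemma ess_bounded_power:
  fixes f :: "'a \<Rightarrow> 'b::{real_normed_algebra_1, second_countable_topology}"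
  assumes "ess_bounded M f"
  shows "ess_bounded M (\<lambda>x. f x ^ n)"
  by (induction n) (auto intro: ess_bounded_const ess_bounded_mult assms)

lemma ess_bounded_norm:
  assumes "ess_bounded M f"
  shows "ess_bounded M (\<lambda>x. norm (f x))"
  using assms unfolding ess_bounded_def by auto

lemma ess_bounded_of_real:
  assumes "ess_bounded M f"
  shows "ess_bounded M (\<lambda>x. of_real (f x) :: 'b::{real_normed_algebra_1, second_countable_topology})"
  using assms unfolding ess_bounded_def by auto

lemma ess_bounded_integrable:
  fixes f :: "'a \<Rightarrow> 'b::{banach, second_countable_topology}"
  assumes "finite_measure M" "ess_bounded M f"
  shows "integrable M f"
  using assms finite_measure.integrable_const_bound unfolding ess_bounded_def by blast

lemma ess_bounded_coeff_power:
  fixes p :: "'a \<Rightarrow> 'b::{real_normed_algebra_1, second_countable_topology, comm_semiring_1} poly"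
  assumes "\<And>k. ess_bounded M (\<lambda>x. coeff (p x) k)"
  shows "ess_bounded M (\<lambda>x. coeff (p x ^ n) k)"
proof (induction n arbitrary: k)
  case 0
  show ?case
    by (simp add: coeff_1 ess_bounded_const)
next
  case (Suc n)
  show ?case
    by (simp add: coeff_mult) (intro ess_bounded_sum ess_bounded_mult assms Suc.IH)
qed

section \<open>Polynomials and powers\<close>

lemma coeff_power_1:
  fixes p :: "'a::comm_semiring_1 poly"
  shows "coeff (p ^ n) 1 = of_nat n * coeff p 0 ^ (n - 1) * coeff p 1"
proof (induction n)
  case (Suc n)
  then show ?case
    by (cases n) (simp_all add: coeff_mult coeff_0_power algebra_simps)
qed simp

lemma coeff_power_2:
  fixes p :: "'a::comm_semiring_1 poly"
  shows "coeff (p ^ n) 2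
    = of_nat n * coeff p 0 ^ (n - 1) * coeff p 2 + of_nat (n choose 2) * coeff p 0 ^ (n - 2) * coeff p 1 ^ 2"
proof (induction n)
  case (Suc n)
  let ?a = "coeff p 0" and ?b = "coeff p 1" and ?c = "coeff p 2"
  have "coeff (p ^ Suc n) 2 = ?a * coeff (p ^ n) 2 + ?b * coeff (p ^ n) 1 + ?c * ?a ^ n"
    by (simp add: coeff_mult numeral_2_eq_2 coeff_0_power)
  also have "\<dots> = of_nat (Suc n) * ?a ^ n * ?c + of_nat (Suc n choose 2) * ?a ^ (n - 1) * ?b ^ 2"
    unfolding Suc.IH coeff_power_1
    by (cases n; cases "n - 1") (auto simp: numeral_2_eq_2 algebra_simps power2_eq_square mult_2)
  finally show ?case
    by simp
qed (simp add: numeral_2_eq_2)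

lemma pcompose_power_left: "(p \<circ>\<^sub>p q) ^ n = p ^ n \<circ>\<^sub>p q"
  for p q :: "'a::comm_ring_1 poly"
  by (induction n) (simp_all add: pcompose_mult pcompose_1)

lemma poly_eq_sum_coeff:
  fixes p :: "'a::comm_semiring_1 poly"
  assumes "degree p \<le> K"
  shows "poly p x = (\<Sum>k\<le>K. coeff p k * x ^ k)"
proof -
  have "poly p x = poly (\<Sum>k\<le>K. monom (coeff p k) k) x"
    by (simp only: poly_as_sum_of_monoms'[OF assms])
  then show ?thesis
    by (simp add: poly_sum poly_monom)
qed

lemma norm_sum_powers_le:
  fixes a :: "nat \<Rightarrow> 'a::real_normed_field"
  assumes "norm z \<le> 1"
  shows "norm (\<Sum>k\<in>{j..K}. a k * z ^ k) \<le> (\<Sum>k\<in>{j..K}. norm (a k)) * norm z ^ j"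
proof -
  have "norm (\<Sum>k\<in>{j..K}. a k * z ^ k) \<le> (\<Sum>k\<in>{j..K}. norm (a k) * norm z ^ k)"
    by (rule norm_sum[THEN order_trans]) (simp add: norm_mult norm_power)
  also have "\<dots> \<le> (\<Sum>k\<in>{j..K}. norm (a k) * norm z ^ j)"
    using assms by (intro sum_mono mult_left_mono power_decreasing) auto
  finally show ?thesis
    by (simp add: sum_distrib_right)
qed

lemma norm_sum_powers_minus_quadratic_le:
  fixes c :: "nat \<Rightarrow> 'a::real_normed_field"
  assumes "c 1 = 0" "c 3 = 0" "3 \<le> K" "norm z \<le> 1"
  shows "norm ((\<Sum>k\<le>K. c k * z ^ k) - (c 0 + z ^ 2 * c 2)) \<le> (\<Sum>k\<in>{4..K}. norm (c k)) * norm z ^ 4"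
proof -
  have "{..K} = {..<4} \<union> {4..K}"
    using assms(3) by auto
  then have "(\<Sum>k\<le>K. c k * z ^ k) = (\<Sum>k<4. c k * z ^ k) + (\<Sum>k\<in>{4..K}. c k * z ^ k)"
    by (simp add: sum.union_disjoint[symmetric] ivl_disj_int_one)
  moreover have "(\<Sum>k<4. c k * z ^ k) = c 0 + z ^ 2 * c 2"
    using assms(1,2) by (simp add: numeral_eq_Suc lessThan_Suc)
  ultimately show ?thesis
    using assms(4) by (simp add: norm_sum_powers_le)
qed

lemma norm_power_diff_le:
  fixes x y :: "'a::real_normed_field"
  assumes "norm x \<le> B" "norm y \<le> B"
  shows "norm (x ^ n - y ^ n) \<le> of_nat n * B ^ (n - 1) * norm (x - y)"
proof -
  have "norm (\<Sum>i<n. y ^ (n - Suc i) * x ^ i) \<le> (\<Sum>i<n. B ^ (n - Suc i) * B ^ i)"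
    using assms by (intro norm_sum[THEN order_trans] sum_mono)
      (simp add: norm_mult norm_power mult_mono' power_mono)
  also have "\<dots> = of_nat n * B ^ (n - 1)"
    by (simp add: power_add[symmetric])
  finally show ?thesis
    by (simp add: power_diff_sumr2 norm_mult mult.commute mult_left_mono)
qed

lemma (in prob_space) norm_integral_power_diff_le:
  fixes f g :: "'a \<Rightarrow> 'b::{real_normed_field, banach, second_countable_topology}"
  assumes [measurable]: "f \<in> borel_measurable M" "g \<in> borel_measurable M"
    and bounded: "AE x in M. norm (f x) \<le> B \<and> norm (g x) \<le> B"
    and close: "AE x in M. norm (f x - g x) \<le> r"
  shows "norm ((\<integral>x. f x ^ n \<partial>M) - (\<integral>x. g x ^ n \<partial>M)) \<le> real n * B ^ (n - 1) * r"
proof -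
  have "integrable M (\<lambda>x. h x ^ n)" if "h \<in> borel_measurable M" "AE x in M. norm (h x) \<le> B"
    for h :: "'a \<Rightarrow> 'b"
  proof (rule integrable_const_bound[where B = "B ^ n"])
    show "AE x in M. norm (h x ^ n) \<le> B ^ n"
      using that(2) by eventually_elim (simp add: norm_power power_mono)
  qed (use that(1) in measurable)
  then have integrable: "integrable M (\<lambda>x. f x ^ n)" "integrable M (\<lambda>x. g x ^ n)"
    using bounded by (auto elim: eventually_mono)
  from bounded close have "AE x in M. norm (f x ^ n - g x ^ n) \<le> real n * B ^ (n - 1) * r"
  proof eventually_elim
    case (elim x)
    then have "0 \<le> B"
      using norm_ge_zero[of "f x"] by linarith
    with elim have "norm (f x ^ n - g x ^ n) \<le> real n * B ^ (n - 1) * norm (f x - g x)"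
      by (intro norm_power_diff_le) auto
    also have "\<dots> \<le> real n * B ^ (n - 1) * r"
      using elim \<open>0 \<le> B\<close> by (intro mult_left_mono) auto
    finally show ?case .
  qed
  then have "norm (\<integral>x. f x ^ n - g x ^ n \<partial>M) \<le> real n * B ^ (n - 1) * r"
    using integrable by (intro integral_norm_bound[THEN order_trans] integral_le_const) auto
  then show ?thesis
    using integrable by simp
qed

section \<open>The law of the perturbation\<close>

lemma prob_space_omega_law: "prob_space (omega_law m)"
  unfolding omega_law_def by (intro prob_space_PiM prob_space_uniform_measure) auto

lemma measurable_omega_law_coord:
  assumes "i < m"
  shows "(\<lambda>\<omega>. \<omega> i) \<in> borel_measurable (omega_law m)"
proof -
  have "(\<lambda>\<omega>. \<omega> i) \<in> omega_law m \<rightarrow>\<^sub>M uniform_measure lborel {-1..1::real}"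
    unfolding omega_law_def using assms by (intro measurable_component_singleton) auto
  then show ?thesis
    by (metis measurable_cong_sets sets_lborel sets_uniform_measure)
qed

lemma AE_omega_law_coord_le_1: "AE \<omega> in omega_law m. \<forall>i<m. \<bar>\<omega> i\<bar> \<le> 1"
proof -
  have "AE x in uniform_measure lborel {-1..1::real}. \<bar>x\<bar> \<le> 1"
    by (rule AE_uniform_measureI) auto
  then have "AE \<omega> in omega_law m. \<bar>\<omega> i\<bar> \<le> 1" if "i < m" for i
    unfolding omega_law_def using that
    by (intro AE_PiM_component[where P = "\<lambda>x. \<bar>x\<bar> \<le> 1"]) (auto intro: prob_space_uniform_measure)
  then have "AE \<omega> in omega_law m. \<forall>i\<in>{..<m}. \<bar>\<omega> i\<bar> \<le> 1"
    by (intro AE_finite_allI) auto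
  then show ?thesis
    by (auto elim: eventually_mono)
qed

lemma measurable_omega_law_reflection:
  "compose {..<m} uminus \<in> omega_law m \<rightarrow>\<^sub>M omega_law m"
  unfolding omega_law_def compose_def
  by (intro measurable_restrict) (auto intro!: measurable_component_singleton)

lemma omega_law_reflection_invariant:
  "distr (omega_law m) (omega_law m) (compose {..<m} uminus) = omega_law m"
proof -
  have "uminus \<in> uniform_measure lborel {-1..1} \<rightarrow>\<^sub>M uniform_measure lborel {-1..1::real}"
    by (subst measurable_cong_sets[where M' = borel and N' = borel]) auto
  then show ?thesis
    unfolding omega_law_def
    by (subst distr_PiM_finite_prob_space')
       (auto intro: prob_space_uniform_measure simp: distr_uniform_measure_uminus[of 1])
qed

lemma integral_omega_law_coord_mult:
  assumes "i < m" "j < m"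
  shows "(\<integral>\<omega>. \<omega> i * \<omega> j \<partial>omega_law m) = (if i = j then 1 / 3 else 0)"
proof -
  let ?U = "uniform_measure lborel {-1..1::real}"
  interpret U: prob_space ?U
    by (intro prob_space_uniform_measure) auto
  interpret product_prob_space "\<lambda>_::nat. ?U"
    by unfold_locales
  define f where "f k x = (if k = i then x else 1) * (if k = j then x else 1)" for k and x :: real
  have uniform_moment: "(\<integral>x. x ^ k \<partial>?U) = (1 - (-1) ^ Suc k) / (2 * Suc k)" for k
    by (simp add: integral_uniform_measure_power)
  have integrable: "integrable ?U (f k)" for k
  proof (rule U.integrable_const_bound[where B = 1])
    have "\<bar>f k x\<bar> \<le> 1" if "\<bar>x\<bar> \<le> 1" for x
      using that by (simp add: f_def abs_mult mult_le_one)
    then show "AE x in ?U. norm (f k x) \<le> 1"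
      by (intro AE_uniform_measureI AE_I2) auto
  qed (subst measurable_cong_sets[where M' = borel and N' = borel], simp_all add: f_def[abs_def])
  have "(\<integral>\<omega>. \<omega> i * \<omega> j \<partial>omega_law m) = (\<integral>\<omega>. (\<Prod>k<m. f k (\<omega> k)) \<partial>Pi\<^sub>M {..<m} (\<lambda>_. ?U))"
    using assms by (simp add: omega_law_def f_def prod.distrib prod.delta)
  also have "\<dots> = (\<Prod>k<m. \<integral>x. f k x \<partial>?U)"
    using integrable by (intro product_integral_prod) auto
  also have "\<dots> = (\<Prod>k<m. if k = i \<and> k = j then 1 / 3 else if k = i \<or> k = j then 0 else 1)"
    using uniform_moment[of 1] uniform_moment[of 2] by (intro prod.cong) (auto simp: f_def power2_eq_square)
  also have "\<dots> = (if i = j then 1 / 3 else 0)"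
  proof (cases "i = j")
    case True
    then have "(\<Prod>k<m. if k = i \<and> k = j then 1 / 3 else if k = i \<or> k = j then 0 else 1)
        = (\<Prod>k<m. if k = i then 1 / 3 else 1 :: real)"
      by (intro prod.cong) auto
    with True assms(1) show ?thesis
      by simp
  qed (use assms in \<open>auto intro: prod_zero\<close>)
  finally show ?thesis .
qed

lemma integral_omega_law_quadratic_form:
  "(\<integral>\<omega>. (\<Sum>i<m. \<Sum>j<m. complex_of_real (\<omega> i * \<omega> j) * F i j) \<partial>omega_law m) = (\<Sum>i<m. F i i / 3)"
proof -
  interpret prob_space "omega_law m"
    by (rule prob_space_omega_law)
  have integrable: "integrable (omega_law m) (\<lambda>\<omega>. complex_of_real (\<omega> i * \<omega> j) * F i j)"
    if "i < m" "j < m" for i j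
  proof (intro integrable_mult_left integrable_of_real integrable_const_bound[where B = 1])
    show "AE \<omega> in omega_law m. norm (\<omega> i * \<omega> j) \<le> 1"
      using AE_omega_law_coord_le_1 by eventually_elim (use that in \<open>auto simp: abs_mult mult_le_one\<close>)
  qed (use that measurable_omega_law_coord in simp)
  have "(\<integral>\<omega>. (\<Sum>i<m. \<Sum>j<m. complex_of_real (\<omega> i * \<omega> j) * F i j) \<partial>omega_law m)
      = (\<Sum>i<m. \<Sum>j<m. complex_of_real (\<integral>\<omega>. \<omega> i * \<omega> j \<partial>omega_law m) * F i j)"
    using integrable
    by (subst Bochner_Integration.integral_sum)
       (auto intro!: Bochner_Integration.integrable_sum sum.cong simp: Bochner_Integration.integral_sum simp del: of_real_mult)
  also have "\<dots> = (\<Sum>i<m. \<Sum>j<m. if i = j then F i j / 3 else 0)"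
    by (intro sum.cong refl) (simp add: integral_omega_law_coord_mult)
  also have "\<dots> = (\<Sum>i<m. F i i / 3)"
    by simp
  finally show ?thesis .
qed

lemma ess_bounded_omega_law_coord:
  assumes "i < m"
  shows "ess_bounded (omega_law m) (\<lambda>\<omega>. \<omega> i)"
  unfolding ess_bounded_def
proof
  show "\<exists>B. AE \<omega> in omega_law m. norm (\<omega> i) \<le> B"
    using AE_omega_law_coord_le_1[of m] assms by (intro exI[of _ 1]) (auto elim: eventually_mono)
qed (rule measurable_omega_law_coord[OF assms])

lemma ess_bounded_omega_law_prod_list:
  assumes "set is \<subseteq> {..<m}"
  shows "ess_bounded (omega_law m) (\<lambda>\<omega>. prod_list (map \<omega> is))"
  using assms
proof (induction "is")
  case Nil
  then show ?case
    by (simp add: ess_bounded_const)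
next
  case (Cons i "is")
  then show ?case
    by (simp add: ess_bounded_mult ess_bounded_omega_law_coord)
qed

lemma integrable_omega_law:
  fixes f :: "(nat \<Rightarrow> real) \<Rightarrow> 'b::{banach, second_countable_topology}"
  assumes "ess_bounded (omega_law m) f"
  shows "integrable (omega_law m) f"
  using prob_space.finite_measure[OF prob_space_omega_law] assms by (rule ess_bounded_integrable)

section \<open>The shape Taylor polynomial\<close>

definition shape_term :: "nat \<Rightarrow> (nat list \<Rightarrow> complex) \<Rightarrow> nat \<Rightarrow> (nat \<Rightarrow> real) \<Rightarrow> complex" where
  "shape_term m D q \<omega> = (\<Sum>is\<in>multi_idx m q. complex_of_real (prod_list (map \<omega> is)) * D is)"

lemma shape_term_0: "shape_term m D 0 \<omega> = D []"
proof -
  have "multi_idx m 0 = {[]}"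
    unfolding multi_idx_def by auto
  then show ?thesis
    by (simp add: shape_term_def)
qed

lemma shape_term_1: "shape_term m D 1 \<omega> = (\<Sum>i<m. complex_of_real (\<omega> i) * D [i])"
proof -
  have "multi_idx m 1 = (\<lambda>i. [i]) ` {..<m}"
    unfolding multi_idx_def by (auto simp: length_Suc_conv)
  then show ?thesis
    by (simp add: shape_term_def sum.reindex inj_on_def)
qed

lemma shape_term_2:
  "shape_term m D 2 \<omega> = (\<Sum>i<m. \<Sum>j<m. complex_of_real (\<omega> i * \<omega> j) * D [i, j])"
proof -
  have "multi_idx m 2 = (\<lambda>p. [fst p, snd p]) ` ({..<m} \<times> {..<m})"
    unfolding multi_idx_def by (auto simp: length_Suc_conv numeral_2_eq_2 image_iff)
  then show ?thesis
    by (simp add: shape_term_def sum.reindex inj_on_def sum.cartesian_product case_prod_beta)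
qed

lemma shape_term_reflect:
  "shape_term m D q (compose {..<m} uminus \<omega>) = (-1) ^ q * shape_term m D q \<omega>"
proof -
  have "prod_list (map (compose {..<m} uminus \<omega>) is) = (-1) ^ length is * prod_list (map \<omega> is)"
    if "set is \<subseteq> {..<m}" for "is"
    using that by (induction "is") (auto simp: compose_def)
  then show ?thesis
    unfolding shape_term_def sum_distrib_left
    by (intro sum.cong refl) (auto simp: multi_idx_def)
qed

lemma ess_bounded_shape_term: "ess_bounded (omega_law m) (shape_term m D q)"
  unfolding shape_term_def[abs_def]
  by (intro ess_bounded_sum ess_bounded_mult ess_bounded_of_real ess_bounded_const
      ess_bounded_omega_law_prod_list) (auto simp: multi_idx_def)

definition shape_taylor_poly :: "nat \<Rightarrow> nat \<Rightarrow> (nat list \<Rightarrow> complex) \<Rightarrow> (nat \<Rightarrow> real) \<Rightarrow> complex poly" where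
  "shape_taylor_poly m N D \<omega> = (\<Sum>q\<le>N. monom (shape_term m D q \<omega> / fact q) q)"

lemma coeff_shape_taylor_poly:
  "coeff (shape_taylor_poly m N D \<omega>) q = (if q \<le> N then shape_term m D q \<omega> / fact q else 0)"
  by (simp add: shape_taylor_poly_def coeff_sum coeff_monom)

lemma degree_shape_taylor_poly: "degree (shape_taylor_poly m N D \<omega>) \<le> N"
  by (rule degree_le) (simp add: coeff_shape_taylor_poly)

lemma poly_shape_taylor_poly:
  "poly (shape_taylor_poly m N D \<omega>) (complex_of_real \<epsilon>) = shape_taylor m N D \<epsilon> \<omega>"
proof -
  have "shape_taylor m N D \<epsilon> \<omega>
      = D [] + (\<Sum>q\<in>{1..N}. complex_of_real (\<epsilon> ^ q / fact q) * shape_term m D q \<omega>)"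
    unfolding shape_taylor_def shape_term_def ..
  moreover have "{..N} = insert 0 {1..N}"
    by auto
  ultimately show ?thesis
    by (simp add: shape_taylor_poly_def poly_sum poly_monom shape_term_0 mult.commute)
qed

lemma shape_taylor_poly_reflect:
  "shape_taylor_poly m N D (compose {..<m} uminus \<omega>) = shape_taylor_poly m N D \<omega> \<circ>\<^sub>p [:0, -1:]"
  by (simp add: poly_eq_iff coeff_pcompose_linear coeff_shape_taylor_poly shape_term_reflect)

lemma ess_bounded_coeff_shape_taylor_poly:
  "ess_bounded (omega_law m) (\<lambda>\<omega>. coeff (shape_taylor_poly m N D \<omega>) q)"
  unfolding coeff_shape_taylor_poly divide_inverse
  by (cases "q \<le> N") (simp_all add: ess_bounded_mult ess_bounded_shape_term ess_bounded_const)

section \<open>Moments of the perturbed field\<close>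

lemma ess_bounded_coeff_shape_taylor_power:
  "ess_bounded (omega_law m) (\<lambda>\<omega>. coeff (shape_taylor_poly m N D \<omega> ^ n) k)"
  by (intro ess_bounded_coeff_power ess_bounded_coeff_shape_taylor_poly)

lemma integral_coeff_shape_taylor_power_odd:
  assumes "odd k"
  shows "(\<integral>\<omega>. coeff (shape_taylor_poly m N D \<omega> ^ n) k \<partial>omega_law m) = 0"
proof (rule integral_eq_zero_if_odd[OF measurable_omega_law_reflection omega_law_reflection_invariant])
  show "(\<lambda>\<omega>. coeff (shape_taylor_poly m N D \<omega> ^ n) k) \<in> borel_measurable (omega_law m)"
    using ess_bounded_coeff_shape_taylor_power unfolding ess_bounded_def by blast
  show "coeff (shape_taylor_poly m N D (compose {..<m} uminus \<omega>) ^ n) k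
      = - coeff (shape_taylor_poly m N D \<omega> ^ n) k" for \<omega>
    using assms by (simp add: shape_taylor_poly_reflect pcompose_power_left coeff_pcompose_linear)
qed

lemma integral_coeff_shape_taylor_power_2:
  assumes "N \<ge> 2"
  shows "(\<integral>\<omega>. coeff (shape_taylor_poly m N D \<omega> ^ n) 2 \<partial>omega_law m)
    = (\<Sum>i<m. of_nat (n choose 2) * D [] ^ (n - 2) * D [i] ^ 2
              + of_nat n * D [] ^ (n - 1) * (1 / 2) * D [i, i]) / 3"
proof -
  let ?T = "shape_term m D"
  have integrable: "integrable (omega_law m) (?T q)" "integrable (omega_law m) (\<lambda>\<omega>. ?T q \<omega> ^ 2)" for q
    by (intro integrable_omega_law ess_bounded_power ess_bounded_shape_term)+
  have "coeff (shape_taylor_poly m N D \<omega> ^ n) 2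
      = of_nat n * D [] ^ (n - 1) * ?T 2 \<omega> / 2 + of_nat (n choose 2) * D [] ^ (n - 2) * ?T 1 \<omega> ^ 2"
    for \<omega>
    using assms by (simp add: coeff_power_2 coeff_shape_taylor_poly shape_term_0)
  then have "(\<integral>\<omega>. coeff (shape_taylor_poly m N D \<omega> ^ n) 2 \<partial>omega_law m)
      = of_nat n * D [] ^ (n - 1) * (\<integral>\<omega>. ?T 2 \<omega> \<partial>omega_law m) / 2
        + of_nat (n choose 2) * D [] ^ (n - 2) * (\<integral>\<omega>. ?T 1 \<omega> ^ 2 \<partial>omega_law m)"
    using integrable by simp
  also have "(\<integral>\<omega>. ?T 2 \<omega> \<partial>omega_law m) = (\<Sum>i<m. D [i, i] / 3)"
    unfolding shape_term_2 by (rule integral_omega_law_quadratic_form)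
  also have "(\<integral>\<omega>. ?T 1 \<omega> ^ 2 \<partial>omega_law m) = (\<Sum>i<m. D [i] * D [i] / 3)"
  proof -
    have "?T 1 \<omega> ^ 2 = (\<Sum>i<m. \<Sum>j<m. complex_of_real (\<omega> i * \<omega> j) * (D [i] * D [j]))" for \<omega>
      unfolding shape_term_1 power2_eq_square sum_product
      by (intro sum.cong refl) (simp add: algebra_simps)
    then show ?thesis
      using integral_omega_law_quadratic_form[of m "\<lambda>i j. D [i] * D [j]"] by simp
  qed
  finally show ?thesis
    by (simp add: sum.distrib sum_distrib_left sum_divide_distrib[symmetric] add_divide_distrib
        power2_eq_square mult_ac)
qed

lemma integral_shape_taylor_power:
  "\<exists>K. \<forall>\<epsilon>. \<bar>\<epsilon>\<bar> \<le> 1 \<longrightarrow>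
    norm ((\<integral>\<omega>. shape_taylor m N D \<epsilon> \<omega> ^ n \<partial>omega_law m)
      - (D [] ^ n + complex_of_real \<epsilon> ^ 2
           * (\<integral>\<omega>. coeff (shape_taylor_poly m N D \<omega> ^ n) 2 \<partial>omega_law m)))
    \<le> K * \<epsilon> ^ 4"
proof -
  interpret prob_space "omega_law m"
    by (rule prob_space_omega_law)
  define c where "c k = (\<integral>\<omega>. coeff (shape_taylor_poly m N D \<omega> ^ n) k \<partial>omega_law m)" for k
  define K where "K = n * N + 3"
  have integrable: "integrable (omega_law m) (\<lambda>\<omega>. coeff (shape_taylor_poly m N D \<omega> ^ n) k)" for k
    by (intro integrable_omega_law ess_bounded_coeff_shape_taylor_power)
  have "degree (shape_taylor_poly m N D \<omega> ^ n) \<le> K" for \<omega>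
  proof -
    have "degree (shape_taylor_poly m N D \<omega> ^ n) \<le> degree (shape_taylor_poly m N D \<omega>) * n"
      by (rule degree_power_le)
    also have "\<dots> \<le> K"
      unfolding K_def using degree_shape_taylor_poly[of m N D \<omega>] by (simp add: trans_le_add1)
    finally show ?thesis .
  qed
  then have "shape_taylor m N D \<epsilon> \<omega> ^ n
      = (\<Sum>k\<le>K. coeff (shape_taylor_poly m N D \<omega> ^ n) k * complex_of_real \<epsilon> ^ k)" for \<epsilon> \<omega>
    unfolding poly_shape_taylor_poly[symmetric] poly_power[symmetric] by (rule poly_eq_sum_coeff)
  then have expand: "(\<integral>\<omega>. shape_taylor m N D \<epsilon> \<omega> ^ n \<partial>omega_law m)
      = (\<Sum>k\<le>K. c k * complex_of_real \<epsilon> ^ k)" for \<epsilon>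
    using integrable by (simp add: c_def Bochner_Integration.integral_sum)
  have "c 0 = D [] ^ n"
    by (simp add: c_def coeff_0_power coeff_shape_taylor_poly shape_term_0 prob_space)
  moreover have "c 1 = 0" "c 3 = 0"
    unfolding c_def by (simp_all add: integral_coeff_shape_taylor_power_odd)
  ultimately have "norm ((\<integral>\<omega>. shape_taylor m N D \<epsilon> \<omega> ^ n \<partial>omega_law m) - (D [] ^ n + complex_of_real \<epsilon> ^ 2 * c 2))
      \<le> (\<Sum>k\<in>{4..K}. norm (c k)) * \<epsilon> ^ 4" if "\<bar>\<epsilon>\<bar> \<le> 1" for \<epsilon>
    using norm_sum_powers_minus_quadratic_le[of c K "complex_of_real \<epsilon>"] that
    by (simp add: expand K_def power_even_abs_numeral)
  then show ?thesis
    unfolding c_def by blast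
qed

lemma shape_taylor_bounded:
  "\<exists>B. AE \<omega> in omega_law m. \<forall>\<epsilon>. \<bar>\<epsilon>\<bar> \<le> 1 \<longrightarrow> norm (shape_taylor m N D \<epsilon> \<omega>) \<le> B"
proof -
  let ?P = "shape_taylor_poly m N D"
  have "ess_bounded (omega_law m) (\<lambda>\<omega>. \<Sum>q\<le>N. norm (coeff (?P \<omega>) q))"
    by (intro ess_bounded_sum ess_bounded_norm ess_bounded_coeff_shape_taylor_poly)
  then obtain B where B: "AE \<omega> in omega_law m. norm (\<Sum>q\<le>N. norm (coeff (?P \<omega>) q)) \<le> B"
    unfolding ess_bounded_def by blast
  have bound: "norm (shape_taylor m N D \<epsilon> \<omega>) \<le> (\<Sum>q\<le>N. norm (coeff (?P \<omega>) q))"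
    if "\<bar>\<epsilon>\<bar> \<le> 1" for \<epsilon> \<omega>
  proof -
    have "shape_taylor m N D \<epsilon> \<omega> = (\<Sum>q\<in>{0..N}. coeff (?P \<omega>) q * complex_of_real \<epsilon> ^ q)"
      unfolding poly_shape_taylor_poly[symmetric] atLeast0AtMost
      by (rule poly_eq_sum_coeff[OF degree_shape_taylor_poly])
    also have "norm \<dots> \<le> (\<Sum>q\<in>{0..N}. norm (coeff (?P \<omega>) q)) * norm (complex_of_real \<epsilon>) ^ 0"
      using that by (intro norm_sum_powers_le) simp
    finally show ?thesis
      by (simp only: atLeast0AtMost power_0 mult_1_right)
  qed
  from B have "AE \<omega> in omega_law m. \<forall>\<epsilon>. \<bar>\<epsilon>\<bar> \<le> 1 \<longrightarrow> norm (shape_taylor m N D \<epsilon> \<omega>) \<le> B"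
  proof eventually_elim
    case (elim \<omega>)
    then have "(\<Sum>q\<le>N. norm (coeff (?P \<omega>) q)) \<le> B"
      by (simp add: sum_nonneg)
    then show ?case
      using bound by (blast intro: order_trans)
  qed
  then show ?thesis ..
qed

lemma ess_bounded_shape_taylor: "ess_bounded (omega_law m) (shape_taylor m N D \<epsilon>)"
proof -
  have "shape_taylor m N D \<epsilon> = (\<lambda>\<omega>. \<Sum>q\<le>N. coeff (shape_taylor_poly m N D \<omega>) q * complex_of_real \<epsilon> ^ q)"
    unfolding poly_shape_taylor_poly[symmetric]
    by (intro ext poly_eq_sum_coeff[OF degree_shape_taylor_poly])
  then show ?thesis
    by (simp add: ess_bounded_sum ess_bounded_mult ess_bounded_const ess_bounded_coeff_shape_taylor_poly)
qed

lemma moment_minus_shape_taylor_moment_le: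
  assumes N3: "N \<ge> 3" and "\<bar>\<epsilon>\<bar> \<le> 1"
    and meas: "U \<epsilon> \<in> borel_measurable (omega_law m)"
    and remainder: "\<And>\<omega>. \<omega> \<in> space (omega_law m) \<Longrightarrow>
      norm (U \<epsilon> \<omega> - shape_taylor m N D \<epsilon> \<omega>) \<le> C * \<bar>\<epsilon>\<bar> ^ (N + 1)"
    and bounded: "AE \<omega> in omega_law m. norm (shape_taylor m N D \<epsilon> \<omega>) \<le> B"
  shows "norm (moment m n U \<epsilon> - (\<integral>\<omega>. shape_taylor m N D \<epsilon> \<omega> ^ n \<partial>omega_law m))
    \<le> real n * (B + \<bar>C\<bar>) ^ (n - 1) * (\<bar>C\<bar> * \<epsilon> ^ 4)"
proof -
  let ?S = "shape_taylor m N D"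
  have "norm (U \<epsilon> \<omega> - ?S \<epsilon> \<omega>) \<le> \<bar>C\<bar> * \<epsilon> ^ 4" if "\<omega> \<in> space (omega_law m)" for \<omega>
  proof -
    have "norm (U \<epsilon> \<omega> - ?S \<epsilon> \<omega>) \<le> \<bar>C\<bar> * \<bar>\<epsilon>\<bar> ^ (N + 1)"
      using remainder[OF that] by (meson abs_ge_self mult_right_mono order_trans zero_le_power abs_ge_zero)
    also have "\<dots> \<le> \<bar>C\<bar> * \<bar>\<epsilon>\<bar> ^ 4"
      using \<open>\<bar>\<epsilon>\<bar> \<le> 1\<close> N3 by (intro mult_left_mono power_decreasing) auto
    finally show ?thesis
      by (simp add: power_even_abs_numeral)
  qed
  then have close: "AE \<omega> in omega_law m. norm (U \<epsilon> \<omega> - ?S \<epsilon> \<omega>) \<le> \<bar>C\<bar> * \<epsilon> ^ 4"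
    by (rule AE_I2)
  have small: "\<bar>C\<bar> * \<epsilon> ^ 4 \<le> \<bar>C\<bar>"
    using power_le_one[OF abs_ge_zero \<open>\<bar>\<epsilon>\<bar> \<le> 1\<close>, of 4]
    by (simp add: power_even_abs_numeral mult_left_le)
  from bounded close have "AE \<omega> in omega_law m. norm (U \<epsilon> \<omega>) \<le> B + \<bar>C\<bar> \<and> norm (?S \<epsilon> \<omega>) \<le> B + \<bar>C\<bar>"
  proof eventually_elim
    case (elim \<omega>)
    then show ?case
      using small norm_triangle_ineq2[of "U \<epsilon> \<omega>" "?S \<epsilon> \<omega>"] abs_ge_zero[of C] by linarith
  qed
  then show ?thesis
    unfolding moment_def using close meas ess_bounded_shape_taylor
    by (intro prob_space.norm_integral_power_diff_le[OF prob_space_omega_law])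
      (auto simp: ess_bounded_def)
qed

lemma moment_shape_taylor_approx:
  assumes N3: "N \<ge> 3"
    and meas: "\<And>\<epsilon>. U \<epsilon> \<in> borel_measurable (omega_law m)"
    and taylor: "\<exists>C \<delta>. \<delta> > 0 \<and> (\<forall>\<epsilon> \<omega>. \<bar>\<epsilon>\<bar> < \<delta> \<longrightarrow> \<omega> \<in> space (omega_law m) \<longrightarrow>
                    norm (U \<epsilon> \<omega> - shape_taylor m N D \<epsilon> \<omega>) \<le> C * \<bar>\<epsilon>\<bar> ^ (N + 1))"
  shows "\<exists>K \<delta>. \<delta> > 0 \<and> (\<forall>\<epsilon>. \<bar>\<epsilon>\<bar> < \<delta> \<longrightarrow>
    norm (moment m n U \<epsilon> - (\<integral>\<omega>. shape_taylor m N D \<epsilon> \<omega> ^ n \<partial>omega_law m)) \<le> K * \<epsilon> ^ 4)"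
proof -
  obtain C \<delta> where "\<delta> > 0" and C: "\<And>\<epsilon> \<omega>. \<bar>\<epsilon>\<bar> < \<delta> \<Longrightarrow> \<omega> \<in> space (omega_law m) \<Longrightarrow>
      norm (U \<epsilon> \<omega> - shape_taylor m N D \<epsilon> \<omega>) \<le> C * \<bar>\<epsilon>\<bar> ^ (N + 1)"
    using taylor by blast
  obtain B where B: "AE \<omega> in omega_law m. \<forall>\<epsilon>. \<bar>\<epsilon>\<bar> \<le> 1 \<longrightarrow> norm (shape_taylor m N D \<epsilon> \<omega>) \<le> B"
    using shape_taylor_bounded by blast
  show ?thesis
  proof (intro exI conjI allI impI)
    show "min \<delta> 1 > 0"
      using \<open>\<delta> > 0\<close> by simp
    fix \<epsilon> :: real
    assume \<epsilon>: "\<bar>\<epsilon>\<bar> < min \<delta> 1"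
    then have "\<bar>\<epsilon>\<bar> \<le> 1"
      by simp
    have "AE \<omega> in omega_law m. norm (shape_taylor m N D \<epsilon> \<omega>) \<le> B"
      using B by eventually_elim (use \<open>\<bar>\<epsilon>\<bar> \<le> 1\<close> in simp)
    moreover have "norm (U \<epsilon> \<omega> - shape_taylor m N D \<epsilon> \<omega>) \<le> C * \<bar>\<epsilon>\<bar> ^ (N + 1)"
      if "\<omega> \<in> space (omega_law m)" for \<omega>
      using C \<epsilon> that by simp
    ultimately show "norm (moment m n U \<epsilon> - (\<integral>\<omega>. shape_taylor m N D \<epsilon> \<omega> ^ n \<partial>omega_law m))
        \<le> (real n * (B + \<bar>C\<bar>) ^ (n - 1) * \<bar>C\<bar>) * \<epsilon> ^ 4"
      using moment_minus_shape_taylor_moment_le[OF N3 \<open>\<bar>\<epsilon>\<bar> \<le> 1\<close> meas] by (simp add: mult.assoc)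
  qed
qed

lemma moment_expansion:
  assumes N3: "N \<ge> 3"
    and meas: "\<And>\<epsilon>. U \<epsilon> \<in> borel_measurable (omega_law m)"
    and taylor: "\<exists>C \<delta>. \<delta> > 0 \<and> (\<forall>\<epsilon> \<omega>. \<bar>\<epsilon>\<bar> < \<delta> \<longrightarrow> \<omega> \<in> space (omega_law m) \<longrightarrow>
                    norm (U \<epsilon> \<omega> - shape_taylor m N D \<epsilon> \<omega>) \<le> C * \<bar>\<epsilon>\<bar> ^ (N + 1))"
  shows "\<exists>C \<delta>. \<delta> > 0 \<and> (\<forall>\<epsilon>. \<bar>\<epsilon>\<bar> < \<delta> \<longrightarrow>
    norm (moment m n U \<epsilon> -
      (D [] ^ n + complex_of_real (\<epsilon> ^ 2 / 3) *
         (\<Sum>i<m. of_nat (n choose 2) * D [] ^ (n - 2) * D [i] ^ 2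
                + of_nat n * D [] ^ (n - 1) * (1 / 2) * D [i, i])))
    \<le> C * \<epsilon> ^ 4)"
proof -
  let ?I = "\<lambda>\<epsilon>. \<integral>\<omega>. shape_taylor m N D \<epsilon> \<omega> ^ n \<partial>omega_law m"
  let ?c = "\<integral>\<omega>. coeff (shape_taylor_poly m N D \<omega> ^ n) 2 \<partial>omega_law m"
  obtain K1 \<delta> where "\<delta> > 0"
    and K1: "\<And>\<epsilon>. \<bar>\<epsilon>\<bar> < \<delta> \<Longrightarrow> norm (moment m n U \<epsilon> - ?I \<epsilon>) \<le> K1 * \<epsilon> ^ 4"
    using moment_shape_taylor_approx[OF N3 meas taylor] by blast
  obtain K2 where K2: "\<And>\<epsilon>. \<bar>\<epsilon>\<bar> \<le> 1 \<Longrightarrow> norm (?I \<epsilon> - (D [] ^ n + complex_of_real \<epsilon> ^ 2 * ?c)) \<le> K2 * \<epsilon> ^ 4"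
    using integral_shape_taylor_power by blast
  have c: "complex_of_real \<epsilon> ^ 2 * ?c = complex_of_real (\<epsilon> ^ 2 / 3) *
      (\<Sum>i<m. of_nat (n choose 2) * D [] ^ (n - 2) * D [i] ^ 2 + of_nat n * D [] ^ (n - 1) * (1 / 2) * D [i, i])"
    for \<epsilon>
    using N3 by (simp add: integral_coeff_shape_taylor_power_2)
  show ?thesis
  proof (intro exI conjI allI impI)
    show "min \<delta> 1 > 0"
      using \<open>\<delta> > 0\<close> by simp
    fix \<epsilon> :: real
    assume "\<bar>\<epsilon>\<bar> < min \<delta> 1"
    then have "norm (moment m n U \<epsilon> - ?I \<epsilon>) + norm (?I \<epsilon> - (D [] ^ n + complex_of_real \<epsilon> ^ 2 * ?c))
        \<le> (K1 + K2) * \<epsilon> ^ 4"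
      using K1 K2 by (simp add: distrib_right add_mono)
    then show "norm (moment m n U \<epsilon> - (D [] ^ n + complex_of_real (\<epsilon> ^ 2 / 3) *
         (\<Sum>i<m. of_nat (n choose 2) * D [] ^ (n - 2) * D [i] ^ 2 + of_nat n * D [] ^ (n - 1) * (1 / 2) * D [i, i])))
      \<le> (K1 + K2) * \<epsilon> ^ 4"
      using dist_triangle[of "moment m n U \<epsilon>" "D [] ^ n + complex_of_real \<epsilon> ^ 2 * ?c" "?I \<epsilon>"]
      unfolding dist_norm c by linarith
  qed
qed

theorem theorem4p1:
  fixes m N :: nat
    and U :: "real \<Rightarrow> (nat \<Rightarrow> real) \<Rightarrow> complex"
    and D :: "nat list \<Rightarrow> complex"
  assumes N3: "N \<ge> 3"
    and meas: "\<And>\<epsilon>. U \<epsilon> \<in> borel_measurable (omega_law m)"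
    and taylor: "\<exists>C \<delta>. \<delta> > 0 \<and> (\<forall>\<epsilon> \<omega>. \<bar>\<epsilon>\<bar> < \<delta> \<longrightarrow> \<omega> \<in> space (omega_law m) \<longrightarrow>
                    norm (U \<epsilon> \<omega> - shape_taylor m N D \<epsilon> \<omega>) \<le> C * \<bar>\<epsilon>\<bar> ^ (N + 1))"
  shows
    "(\<exists>C \<delta>. \<delta> > 0 \<and> (\<forall>\<epsilon>. \<bar>\<epsilon>\<bar> < \<delta> \<longrightarrow>
        norm (moment m 1 U \<epsilon> -
          (D [] + complex_of_real (\<epsilon>^2 / fact 3) * (\<Sum>i<m. D [i, i])))
        \<le> C * \<epsilon> ^ 4))
   \<and> (\<exists>C \<delta>. \<delta> > 0 \<and> (\<forall>\<epsilon>. \<bar>\<epsilon>\<bar> < \<delta> \<longrightarrow>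
        norm (moment m 2 U \<epsilon> -
          (D [] ^ 2 + complex_of_real (\<epsilon>^2 / 3) *
             (\<Sum>i<m. (D [i]) ^ 2 + D [] * D [i, i])))
        \<le> C * \<epsilon> ^ 4))
   \<and> (\<forall>n::nat. n > 2 \<longrightarrow> (\<exists>C \<delta>. \<delta> > 0 \<and> (\<forall>\<epsilon>. \<bar>\<epsilon>\<bar> < \<delta> \<longrightarrow>
        norm (moment m n U \<epsilon> -
          (D [] ^ n + complex_of_real (\<epsilon>^2 / 3) *
             (\<Sum>i<m. of_nat (n choose 2) * D [] ^ (n - 2) * (D [i]) ^ 2
                    + of_nat (n choose 1) * D [] ^ (n - 1) * (1/2) * D [i, i])))
        \<le> C * \<epsilon> ^ 4)))"
proof (intro conjI allI impI)
  note expansion = moment_expansion[OF N3 meas taylor]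
  have mean: "D [] ^ 1 + complex_of_real (\<epsilon> ^ 2 / 3) *
      (\<Sum>i<m. of_nat (1 choose 2) * D [] ^ (1 - 2) * D [i] ^ 2 + of_nat 1 * D [] ^ (1 - 1) * (1 / 2) * D [i, i])
    = D [] + complex_of_real (\<epsilon> ^ 2 / fact 3) * (\<Sum>i<m. D [i, i])" for \<epsilon>
    by (simp add: binomial_eq_0 sum_divide_distrib[symmetric] fact_numeral)
  show "\<exists>C \<delta>. \<delta> > 0 \<and> (\<forall>\<epsilon>. \<bar>\<epsilon>\<bar> < \<delta> \<longrightarrow>
      norm (moment m 1 U \<epsilon> - (D [] + complex_of_real (\<epsilon>^2 / fact 3) * (\<Sum>i<m. D [i, i]))) \<le> C * \<epsilon> ^ 4)"
    using expansion[of 1] unfolding mean .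
  have second: "D [] ^ 2 + complex_of_real (\<epsilon> ^ 2 / 3) *
      (\<Sum>i<m. of_nat (2 choose 2) * D [] ^ (2 - 2) * D [i] ^ 2 + of_nat 2 * D [] ^ (2 - 1) * (1 / 2) * D [i, i])
    = D [] ^ 2 + complex_of_real (\<epsilon> ^ 2 / 3) * (\<Sum>i<m. D [i] ^ 2 + D [] * D [i, i])" for \<epsilon>
    by simp
  show "\<exists>C \<delta>. \<delta> > 0 \<and> (\<forall>\<epsilon>. \<bar>\<epsilon>\<bar> < \<delta> \<longrightarrow>
      norm (moment m 2 U \<epsilon> - (D [] ^ 2 + complex_of_real (\<epsilon>^2 / 3) * (\<Sum>i<m. (D [i]) ^ 2 + D [] * D [i, i])))
      \<le> C * \<epsilon> ^ 4)"
    using expansion[of 2] unfolding second .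
  show "\<exists>C \<delta>. \<delta> > 0 \<and> (\<forall>\<epsilon>. \<bar>\<epsilon>\<bar> < \<delta> \<longrightarrow>
      norm (moment m n U \<epsilon> - (D [] ^ n + complex_of_real (\<epsilon>^2 / 3) *
        (\<Sum>i<m. of_nat (n choose 2) * D [] ^ (n - 2) * (D [i]) ^ 2
               + of_nat (n choose 1) * D [] ^ (n - 1) * (1/2) * D [i, i])))
      \<le> C * \<epsilon> ^ 4)" for n
    using expansion[of n] unfolding choose_one .
qed

end
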